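(* Let $(E,P,\vartheta)$ be a bipolar metric space and let $F\colon E\cup P\to E\cup P$ with $F(E)\subseteq E$, $F(P)\subseteq P$ be a polynomial contraction, i.e. there exist $\pi\in(0,1)$, an integer $\sigma\geq1$ and functions $q_\upsilon\colon E\times P\to[0,\infty)$, $\upsilon=0,\dots,\sigma$, such that $$\sum_{\upsilon=0}^{\sigma} q_\upsilon(Fe,Ff)\,\vartheta^\upsilon(Fe,Ff)\leq \pi\sum_{\upsilon=0}^{\sigma} q_\upsilon(e,f)\,\vartheta^\upsilon(e,f)\quad\text{for all } e\in E,\ f\in P.$$ Assume (i) $q_0(e,f)=0$ for all $e\in E$, $f\in P$; (ii) for every $\upsilon\in\{1,\dots,\sigma\}$ there is $W_\upsilon>0$ with $q_\upsilon(e,f)\leq W_\upsilon$ for all $e\in E$, $f\in P$; (iii) there exist $\varrho\in\{1,\dots,\sigma\}$ and $Q_\varrho>0$ with $q_\varrho(e,f)\geq Q_\varrho$ for all $e\in E$, $f\in P$. Then $F$ is continuous.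
   Context: A bipolar metric space is a triple $(E,P,\vartheta)$ where $E,P$ are nonempty sets and $\vartheta\colon E\times P\to[0,\infty)$ satisfies: (1) for $e\in E$, $f\in P$, $\vartheta(e,f)=0$ iff $e=f$; (2) $\vartheta(e,f)=\vartheta(f,e)$ whenever $e,f\in E\cap P$; (3) $\vartheta(e,f)\leq\vartheta(e,z)+\vartheta(r,z)+\vartheta(r,f)$ for all $e,r\in E$, $z,f\in P$. A sequence $(x_n)$ in $E$ converges to $y\in P$ if $\vartheta(x_n,y)\to0$; a sequence $(y_n)$ in $P$ converges to $x\in E$ if $\vartheta(x,y_n)\to0$. $F$ is continuous if whenever a sequence $(u_n)$ (in $E$ or in $P$) converges to a point $v$, the sequence $(Fu_n)$ converges to $Fv$. $\vartheta^\upsilon$ denotes the $\upsilon$-th power of $\vartheta$, with $\vartheta^0\equiv1$. *)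

theory Defs
  imports Complex_Main
begin

definition bipolar_metric :: "'a set \<Rightarrow> 'a set \<Rightarrow> ('a \<Rightarrow> 'a \<Rightarrow> real) \<Rightarrow> bool" where
  "bipolar_metric E P d \<longleftrightarrow>
     E \<noteq> {} \<and> P \<noteq> {} \<and>
     (\<forall>e\<in>E. \<forall>f\<in>P. d e f \<ge> 0) \<and>
     (\<forall>e\<in>E. \<forall>f\<in>P. d e f = 0 \<longleftrightarrow> e = f) \<and>
     (\<forall>e\<in>E \<inter> P. \<forall>f\<in>E \<inter> P. d e f = d f e) \<and>
     (\<forall>e\<in>E. \<forall>r\<in>E. \<forall>z\<in>P. \<forall>f\<in>P. d e f \<le> d e z + d r z + d r f)"

definition bipolar_continuous :: "'a set \<Rightarrow> 'a set \<Rightarrow> ('a \<Rightarrow> 'a \<Rightarrow> real) \<Rightarrow> ('a \<Rightarrow> 'a) \<Rightarrow> bool" where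
  "bipolar_continuous E P d F \<longleftrightarrow>
     (\<forall>u v. (\<forall>n. u n \<in> E) \<and> v \<in> P \<and> (\<lambda>n. d (u n) v) \<longlonglongrightarrow> 0
        \<longrightarrow> (\<lambda>n. d (F (u n)) (F v)) \<longlonglongrightarrow> 0) \<and>
     (\<forall>u v. (\<forall>n. u n \<in> P) \<and> v \<in> E \<and> (\<lambda>n. d v (u n)) \<longlonglongrightarrow> 0
        \<longrightarrow> (\<lambda>n. d (F v) (F (u n))) \<longlonglongrightarrow> 0)"

end

theory Submission
  imports Defs
begin

(* Chaining the lower bound on q_rho, the contraction inequality and the upper bounds W_u gives
   Q d(Fe,Ff)^rho <= pi (W_1 d(e,f) + ... + W_sigma d(e,f)^sigma), since q_0 vanishes.
   Hence d(Fe,Ff) <= omega(d(e,f)) for the modulus omega(t) = root_rho (pi/Q sum_u W_u t^u),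
   which is continuous at 0 with omega(0) = 0; such a modulus makes F continuous. *)

lemma bipolar_metric_nonneg:
  assumes "bipolar_metric E P d" "e \<in> E" "f \<in> P"
  shows "0 \<le> d e f"
  using assms by (auto simp: bipolar_metric_def)

lemma bipolar_continuous_if_modulus:
  fixes \<omega> :: "real \<Rightarrow> real"
  assumes bp: "bipolar_metric E P d"
    and FE: "F ` E \<subseteq> E" and FP: "F ` P \<subseteq> P"
    and modulus: "\<And>e f. e \<in> E \<Longrightarrow> f \<in> P \<Longrightarrow> d (F e) (F f) \<le> \<omega> (d e f)"
    and cont: "isCont \<omega> 0" and zero: "\<omega> 0 = 0"
  shows "bipolar_continuous E P d F"
proof -
  have image_tendsto_zero: "(\<lambda>n. d (F (x n)) (F (y n))) \<longlonglongrightarrow> 0"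
    if "\<And>n. x n \<in> E" "\<And>n. y n \<in> P" "(\<lambda>n. d (x n) (y n)) \<longlonglongrightarrow> 0" for x y
  proof (rule tendsto_sandwich[OF _ _ tendsto_const])
    show "\<forall>\<^sub>F n in sequentially. 0 \<le> d (F (x n)) (F (y n))"
      using that FE FP by (auto intro!: always_eventually bipolar_metric_nonneg[OF bp])
    show "\<forall>\<^sub>F n in sequentially. d (F (x n)) (F (y n)) \<le> \<omega> (d (x n) (y n))"
      using that by (auto intro!: always_eventually modulus)
    show "(\<lambda>n. \<omega> (d (x n) (y n))) \<longlonglongrightarrow> 0"
      using isCont_tendsto_compose[OF cont that(3)] zero by simp
  qed
  show ?thesis
    unfolding bipolar_continuous_def
    by (auto intro: image_tendsto_zero[where x=u and y="\<lambda>_. v" for u v]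
                    image_tendsto_zero[where x="\<lambda>_. v" and y=u for u v])
qed

lemma polynomial_contraction_power_bound:
  fixes q :: "nat \<Rightarrow> 'a \<Rightarrow> 'a \<Rightarrow> real" and W :: "nat \<Rightarrow> real"
  assumes bp: "bipolar_metric E P d"
    and FE: "F ` E \<subseteq> E" and FP: "F ` P \<subseteq> P"
    and \<pi>: "0 \<le> \<pi>"
    and qnn: "\<And>u e f. u \<le> \<sigma> \<Longrightarrow> e \<in> E \<Longrightarrow> f \<in> P \<Longrightarrow> q u e f \<ge> 0"
    and contr: "\<And>e f. e \<in> E \<Longrightarrow> f \<in> P \<Longrightarrow>
      (\<Sum>u=0..\<sigma>. q u (F e) (F f) * d (F e) (F f) ^ u)
        \<le> \<pi> * (\<Sum>u=0..\<sigma>. q u e f * d e f ^ u)"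
    and q0: "\<And>e f. e \<in> E \<Longrightarrow> f \<in> P \<Longrightarrow> q 0 e f = 0"
    and qW: "\<And>u e f. u \<in> {1..\<sigma>} \<Longrightarrow> e \<in> E \<Longrightarrow> f \<in> P \<Longrightarrow> q u e f \<le> W u"
    and \<rho>: "\<rho> \<le> \<sigma>" and qQ: "\<And>e f. e \<in> E \<Longrightarrow> f \<in> P \<Longrightarrow> Q \<le> q \<rho> e f"
    and e: "e \<in> E" and f: "f \<in> P"
  shows "Q * d (F e) (F f) ^ \<rho> \<le> \<pi> * (\<Sum>u=1..\<sigma>. W u * d e f ^ u)"
proof -
  have Fe: "F e \<in> E" and Ff: "F f \<in> P"
    using FE FP e f by auto
  note d_nonneg = bipolar_metric_nonneg[OF bp]
  have "Q * d (F e) (F f) ^ \<rho> \<le> q \<rho> (F e) (F f) * d (F e) (F f) ^ \<rho>"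
    using qQ[OF Fe Ff] d_nonneg[OF Fe Ff] by (intro mult_right_mono) auto
  also have "\<dots> \<le> (\<Sum>u=0..\<sigma>. q u (F e) (F f) * d (F e) (F f) ^ u)"
    using \<rho> qnn[OF _ Fe Ff] d_nonneg[OF Fe Ff]
    by (intro member_le_sum[where f="\<lambda>u. q u (F e) (F f) * d (F e) (F f) ^ u"]) auto
  also have "\<dots> \<le> \<pi> * (\<Sum>u=0..\<sigma>. q u e f * d e f ^ u)"
    using contr[OF e f] .
  also have "(\<Sum>u=0..\<sigma>. q u e f * d e f ^ u) = (\<Sum>u=1..\<sigma>. q u e f * d e f ^ u)"
    using q0[OF e f] by (simp add: sum.atLeast_Suc_atMost)
  also have "\<pi> * \<dots> \<le> \<pi> * (\<Sum>u=1..\<sigma>. W u * d e f ^ u)"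
    using \<pi> qW[OF _ e f] d_nonneg[OF e f]
    by (intro mult_left_mono sum_mono mult_right_mono) auto
  finally show ?thesis .
qed

theorem proposition3p4:
  fixes E P :: "'a set" and d :: "'a \<Rightarrow> 'a \<Rightarrow> real" and F :: "'a \<Rightarrow> 'a"
    and q :: "nat \<Rightarrow> 'a \<Rightarrow> 'a \<Rightarrow> real" and \<pi> :: real and \<sigma> :: nat
  assumes bp: "bipolar_metric E P d"
    and FE: "F ` E \<subseteq> E" and FP: "F ` P \<subseteq> P"
    and pi: "0 < \<pi>" "\<pi> < 1"
    and sigma: "\<sigma> \<ge> 1"
    and qnn: "\<And>u e f. u \<le> \<sigma> \<Longrightarrow> e \<in> E \<Longrightarrow> f \<in> P \<Longrightarrow> q u e f \<ge> 0"
    and contr: "\<And>e f. e \<in> E \<Longrightarrow> f \<in> P \<Longrightarrow>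
      (\<Sum>u=0..\<sigma>. q u (F e) (F f) * d (F e) (F f) ^ u)
        \<le> \<pi> * (\<Sum>u=0..\<sigma>. q u e f * d e f ^ u)"
    and q0: "\<And>e f. e \<in> E \<Longrightarrow> f \<in> P \<Longrightarrow> q 0 e f = 0"
    and qbd: "\<And>u. u \<in> {1..\<sigma>} \<Longrightarrow> \<exists>W > 0. \<forall>e\<in>E. \<forall>f\<in>P. q u e f \<le> W"
    and qlow: "\<exists>\<rho>\<in>{1..\<sigma>}. \<exists>Q > 0. \<forall>e\<in>E. \<forall>f\<in>P. q \<rho> e f \<ge> Q"
  shows "bipolar_continuous E P d F"
proof -
  obtain \<rho> Q where \<rho>: "\<rho> \<in> {1..\<sigma>}" and Q: "Q > 0"
    and qQ: "\<And>e f. e \<in> E \<Longrightarrow> f \<in> P \<Longrightarrow> Q \<le> q \<rho> e f"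
    using qlow by blast
  obtain W where qW: "\<And>u e f. u \<in> {1..\<sigma>} \<Longrightarrow> e \<in> E \<Longrightarrow> f \<in> P \<Longrightarrow> q u e f \<le> W u"
    using bchoice[of "{1..\<sigma>}" "\<lambda>u W. \<forall>e\<in>E. \<forall>f\<in>P. q u e f \<le> W"] qbd by fast
  define \<omega> where "\<omega> t = root \<rho> (\<pi> / Q * (\<Sum>u=1..\<sigma>. W u * t ^ u))" for t
  have "d (F e) (F f) \<le> \<omega> (d e f)" if e: "e \<in> E" and f: "f \<in> P" for e f
  proof -
    have "Q * d (F e) (F f) ^ \<rho> \<le> \<pi> * (\<Sum>u=1..\<sigma>. W u * d e f ^ u)"
      using polynomial_contraction_power_bound[where q=q, OF bp FE FP _ qnn contr q0 qW _ qQ e f]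
        \<rho> pi(1)
      by simp
    then have "d (F e) (F f) ^ \<rho> \<le> \<pi> / Q * (\<Sum>u=1..\<sigma>. W u * d e f ^ u)"
      using Q by (simp add: field_simps)
    then have "root \<rho> (d (F e) (F f) ^ \<rho>) \<le> \<omega> (d e f)"
      using \<rho> by (simp add: \<omega>_def)
    moreover have "root \<rho> (d (F e) (F f) ^ \<rho>) = d (F e) (F f)"
      using \<rho> FE FP e f by (auto intro!: real_root_power_cancel bipolar_metric_nonneg[OF bp])
    ultimately show ?thesis
      by simp
  qed
  moreover have "isCont \<omega> 0"
    unfolding \<omega>_def by (intro continuous_intros)
  moreover have "\<omega> 0 = 0"
    by (simp add: \<omega>_def)
  ultimately show ?thesis
    using bipolar_continuous_if_modulus[OF bp FE FP] by blast
qed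

end
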